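(* Let $m,n\ge1$ be integers and $f\in C[0,1]$, and let $I_{n,m}(f)=\frac{1}{m(n+1)}\sum_{k=1}^m\sum_{i=0}^n f\left(\frac{kn-n+i}{mn}\right)$. Then (i) $\left|\int_0^1f(x)\,dx-I_{n,m}(f)\right|\le 2K\left(\frac{1}{24m^2n},f;C^0[0,1],C^2[0,1]\right)$; (ii) $\left|\int_0^1f(x)\,dx-I_{n,m}(f)\right|\le\frac94\,\omega_2\left(f;\frac{1}{m\sqrt{6n}}\right)$.
   Context: $I_{n,m}(f)$ equals $\int_0^1\overline{B}_{n,m}(f;x)\,dx$ for the composite Bernstein operator $\overline{B}_{n,m}(f;x)=B_n^{[\frac{k-1}{m},\frac km]}(f;x)$ on $\left[\frac{k-1}{m},\frac km\right]$, where $B_n^{[a,b]}(f;x)=\frac{1}{(b-a)^n}\sum_{i=0}^n\binom ni(x-a)^i(b-x)^{n-i}f(a+i\frac{b-a}{n})$. The $K$-functional is $K(\delta,f;C^0[0,1],C^2[0,1])=\inf\{\|f-g\|_\infty+\delta\|g''\|_\infty: g\in C^2[0,1]\}$ for $\delta\ge0$. $\omega_2(f,\delta)=\sup\{|f(x-h)-2f(x)+f(x+h)|: x\pm h\in[0,1],\ |h|\le\delta\}$. *)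

theory Defs
  imports "HOL-Analysis.Analysis"
begin

definition supnorm01 :: "(real \<Rightarrow> real) \<Rightarrow> real" where
  "supnorm01 g = (SUP x\<in>{0..1}. \<bar>g x\<bar>)"

definition C2_01 :: "(real \<Rightarrow> real) \<Rightarrow> (real \<Rightarrow> real) \<Rightarrow> (real \<Rightarrow> real) \<Rightarrow> bool" where
  "C2_01 g g1 g2 \<longleftrightarrow>
     (\<forall>x\<in>{0..1}. (g has_real_derivative g1 x) (at x within {0..1})) \<and>
     (\<forall>x\<in>{0..1}. (g1 has_real_derivative g2 x) (at x within {0..1})) \<and>
     continuous_on {0..1} g2"

definition Kfun :: "real \<Rightarrow> (real \<Rightarrow> real) \<Rightarrow> real" where
  "Kfun \<delta> f = Inf {supnorm01 (\<lambda>x. f x - g x) + \<delta> * supnorm01 g2 | g g1 g2. C2_01 g g1 g2}"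

definition omega2 :: "(real \<Rightarrow> real) \<Rightarrow> real \<Rightarrow> real" where
  "omega2 f \<delta> = Sup {\<bar>f (x - h) - 2 * f x + f (x + h)\<bar> | x h.
      x - h \<in> {0..1} \<and> x + h \<in> {0..1} \<and> \<bar>h\<bar> \<le> \<delta>}"

definition Inm :: "nat \<Rightarrow> nat \<Rightarrow> (real \<Rightarrow> real) \<Rightarrow> real" where
  "Inm n m f = (1 / (real m * (real n + 1))) *
     (\<Sum>k=1..m. \<Sum>i=0..n. f ((real k * real n - real n + real i) / (real m * real n)))"

end

theory Submission
  imports Defs
begin

text \<open>
  \<open>Inm n m f\<close> is the integral of the composite Bernstein polynomial: on each of the \<open>m\<close> panels the
  rescaled function \<open>F\<close> is replaced by \<open>B\<^sub>n F\<close>, whose integral is \<open>(\<Sum>i\<le>n. F (i/n)) / (n + 1)\<close>.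
  Suppose that at every \<open>x\<close> some line through \<open>(x, F x)\<close> stays within \<open>A + B (t - x)\<^sup>2\<close> of \<open>F t\<close>.
  As \<open>B\<^sub>n\<close> is positive, reproduces lines and maps \<open>(t - x)\<^sup>2\<close> to \<open>x (1 - x) / n\<close>, integration gives
  \<open>\<bar>\<integral>F - \<integral>B\<^sub>n F\<bar> \<le> A + B / (6 n)\<close>, and rescaling a panel divides \<open>B\<close> by \<open>m\<^sup>2\<close>.

  For (i), Taylor's formula for \<open>g \<in> C\<^sup>2\<close> gives \<open>A = 2 \<parallel>f - g\<parallel>\<close>, \<open>B = \<parallel>g''\<parallel> / 2\<close>.
  For (ii), let all second differences of step at most \<open>\<tau>\<close> be bounded by \<open>W\<close>. A discrete maximum
  principle bounds the distance of \<open>f\<close> from its chords of width \<open>2 \<tau>\<close> by \<open>W\<close>; together with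
  telescoping over the nodes \<open>x + j \<tau>\<close> this gives \<open>A = 3 W / 2\<close> and \<open>B = 3 W / (4 \<tau>\<^sup>2)\<close>,
  which for \<open>\<tau> = 1 / (m \<surd>(6 n))\<close> yields the constant \<open>9 / 4\<close>.
\<close>

section \<open>Bernstein quadrature\<close>

lemma sum_Bernstein_centered:
  assumes "n \<ge> 1"
  shows "(\<Sum>k\<le>n. (real k / real n - x) * Bernstein n k x) = 0"
  using assms by (simp add: left_diff_distrib sum_subtractf flip: sum_divide_distrib sum_distrib_left)

lemma sum_Bernstein_centered_sq:
  assumes "n \<ge> 1"
  shows "(\<Sum>k\<le>n. (real k / real n - x)\<^sup>2 * Bernstein n k x) = x * (1 - x) / real n"
proof -
  have "(\<Sum>k\<le>n. (real k / real n - x)\<^sup>2 * Bernstein n k x) =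
      (\<Sum>k\<le>n. (real k * (real k - 1) * Bernstein n k x) / (real n)\<^sup>2
        + (1 - 2 * real n * x) / (real n)\<^sup>2 * (real k * Bernstein n k x)
        + x\<^sup>2 * Bernstein n k x)"
    using assms by (intro sum.cong) (simp_all add: field_simps power2_eq_square)
  also have "\<dots> = x * (1 - x) / real n"
    unfolding sum.distrib sum_distrib_left[symmetric] sum_divide_distrib[symmetric]
      sum_kk_Bernstein sum_k_Bernstein sum_Bernstein
    using assms by (simp add: field_simps power2_eq_square)
  finally show ?thesis .
qed

lemma Bernstein_has_integral:
  assumes "k \<le> n"
  shows "(Bernstein n k has_integral 1 / (real n + 1)) {0..1}"
proof -
  have "((\<lambda>t. t powr (real k + 1 - 1) * (1 - t) powr (real (n - k) + 1 - 1)) has_integral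
      Beta (real k + 1) (real (n - k) + 1)) {0..1}"
    by (rule has_integral_Beta_real) auto
  then have "((\<lambda>t. t ^ k * (1 - t) ^ (n - k)) has_integral Beta (real k + 1) (real (n - k) + 1))
      {0<..<1}"
    by (simp add: has_integral_Icc_iff_Ioo)
      (subst has_integral_cong[of _ _ "\<lambda>t. t powr real k * (1 - t) powr real (n - k)"];
        simp add: powr_realpow)
  then have "((\<lambda>t. real (n choose k) * (t ^ k * (1 - t) ^ (n - k))) has_integral
      real (n choose k) * Beta (real k + 1) (real (n - k) + 1)) {0<..<1}"
    by (rule has_integral_mult_right)
  moreover have "real (n choose k) * Beta (real k + 1) (real (n - k) + 1) = 1 / (real n + 1)"
  proof -
    have "real k + 1 + (real (n - k) + 1) = 1 + real (Suc n)"
      using assms by (simp add: of_nat_diff)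
    then have "Beta (real k + 1) (real (n - k) + 1) = fact k * fact (n - k) / fact (Suc n)"
      using Gamma_fact[of k, where 'a = real] Gamma_fact[of "n - k", where 'a = real]
        Gamma_fact[of "Suc n", where 'a = real]
      by (simp add: Beta_def add.commute)
    moreover have "real (n choose k) * (fact k * fact (n - k)) = (fact n :: real)"
      using binomial_fact_lemma[OF assms] by (metis of_nat_fact of_nat_mult mult.commute)
    ultimately have "real (n choose k) * Beta (real k + 1) (real (n - k) + 1) = fact n / fact (Suc n)"
      by (metis times_divide_eq_right)
    also have "\<dots> = 1 / (real n + 1)"
      by simp
    finally show ?thesis .
  qed
  ultimately have "((\<lambda>t. real (n choose k) * (t ^ k * (1 - t) ^ (n - k))) has_integral
      1 / (real n + 1)) {0<..<1}"
    by simp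
  then show ?thesis
    by (simp add: has_integral_Icc_iff_Ioo Bernstein_def[abs_def] mult.assoc)
qed

text \<open>The integral over \<open>[0,1]\<close> of the Bernstein polynomial \<open>B\<^sub>n F\<close>.\<close>
definition Bernstein_quadrature :: "nat \<Rightarrow> (real \<Rightarrow> real) \<Rightarrow> real" where
  "Bernstein_quadrature n F = (\<Sum>i\<le>n. F (real i / real n)) / (real n + 1)"

definition line_approx :: "(real \<Rightarrow> real) \<Rightarrow> real \<Rightarrow> real \<Rightarrow> bool" where
  "line_approx F A B \<longleftrightarrow>
     (\<forall>x\<in>{0..1}. \<exists>l. \<forall>t\<in>{0..1}. \<bar>F t - F x - l * (t - x)\<bar> \<le> A + B * (t - x)\<^sup>2)"

lemma Bernstein_quadrature_has_integral:
  "((\<lambda>x. \<Sum>i\<le>n. Bernstein n i x * F (real i / real n)) has_integral Bernstein_quadrature n F) {0..1}"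
proof -
  have "((\<lambda>x. Bernstein n i x * F (real i / real n)) has_integral F (real i / real n) / (real n + 1))
      {0..1}" if "i \<le> n" for i
    using has_integral_mult_left[OF Bernstein_has_integral[OF that]] by simp
  then show ?thesis
    unfolding Bernstein_quadrature_def sum_divide_distrib by (intro has_integral_sum) auto
qed

lemma Bernstein_deviation:
  assumes n: "n \<ge> 1" and approx: "line_approx F A B" and x: "x \<in> {0..1}"
  shows "\<bar>(\<Sum>i\<le>n. Bernstein n i x * F (real i / real n)) - F x\<bar> \<le> A + B * (x * (1 - x) / real n)"
proof -
  obtain l where l: "\<And>t. t \<in> {0..1} \<Longrightarrow> \<bar>F t - F x - l * (t - x)\<bar> \<le> A + B * (t - x)\<^sup>2"
    using approx x unfolding line_approx_def by blast
  have "(\<Sum>i\<le>n. Bernstein n i x * F (real i / real n)) - F x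
      = (\<Sum>i\<le>n. Bernstein n i x * (F (real i / real n) - F x))"
    by (simp add: right_diff_distrib sum_subtractf flip: sum_distrib_right)
  also have "\<dots> = (\<Sum>i\<le>n. Bernstein n i x * (F (real i / real n) - F x - l * (real i / real n - x)))
        + l * (\<Sum>i\<le>n. (real i / real n - x) * Bernstein n i x)"
    unfolding sum_distrib_left sum.distrib[symmetric] by (rule sum.cong) (simp_all add: algebra_simps)
  also have "\<dots> = (\<Sum>i\<le>n. Bernstein n i x * (F (real i / real n) - F x - l * (real i / real n - x)))"
    using sum_Bernstein_centered[OF n] by simp
  finally have "\<bar>(\<Sum>i\<le>n. Bernstein n i x * F (real i / real n)) - F x\<bar>
      \<le> (\<Sum>i\<le>n. Bernstein n i x * \<bar>F (real i / real n) - F x - l * (real i / real n - x)\<bar>)"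
    using x by (simp add: Bernstein_nonneg abs_mult sum_abs[THEN order_trans])
  also have "\<dots> \<le> (\<Sum>i\<le>n. Bernstein n i x * (A + B * (real i / real n - x)\<^sup>2))"
    using x n by (intro sum_mono mult_left_mono l) (auto simp: Bernstein_nonneg)
  also have "\<dots> = A * (\<Sum>i\<le>n. Bernstein n i x) + B * (\<Sum>i\<le>n. (real i / real n - x)\<^sup>2 * Bernstein n i x)"
    unfolding sum_distrib_left sum.distrib[symmetric] by (rule sum.cong) (simp_all add: algebra_simps)
  also have "\<dots> = A + B * (x * (1 - x) / real n)"
    using sum_Bernstein_centered_sq[OF n] by simp
  finally show ?thesis .
qed

lemma Bernstein_quadrature_error:
  assumes n: "n \<ge> 1" and F: "continuous_on {0..1} F" and approx: "line_approx F A B"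
  shows "\<bar>integral {0..1} F - Bernstein_quadrature n F\<bar> \<le> A + B / (6 * real n)"
proof -
  define p where "p x = A + B * (x * (1 - x) / real n)" for x
  have "((\<lambda>x. (\<Sum>i\<le>n. Bernstein n i x * F (real i / real n)) - F x) has_integral
      Bernstein_quadrature n F - integral {0..1} F) {0..1}"
    by (intro has_integral_diff Bernstein_quadrature_has_integral integrable_integral
        integrable_continuous_real F)
  moreover have "(p has_integral A + B / (6 * real n)) {0..1}"
  proof -
    define P where "P x = A * x + B * (x\<^sup>2 / 2 - x ^ 3 / 3) / real n" for x
    have "(P has_real_derivative p x) (at x)" for x
      unfolding P_def p_def using n
      by (auto intro!: derivative_eq_intros simp: power2_eq_square field_simps)
    then have "(p has_integral P 1 - P 0) {0..1}"
      by (intro fundamental_theorem_of_calculus)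
        (auto simp: has_real_derivative_iff_has_vector_derivative has_vector_derivative_at_within)
    moreover have "P 1 - P 0 = A + B / (6 * real n)"
      unfolding P_def by (simp add: field_simps)
    ultimately show ?thesis by simp
  qed
  ultimately have "\<bar>Bernstein_quadrature n F - integral {0..1} F\<bar> \<le> A + B / (6 * real n)"
    using integral_norm_bound_integral[of "\<lambda>x. (\<Sum>i\<le>n. Bernstein n i x * F (real i / real n)) - F x"
        "{0..1}" p] Bernstein_deviation[OF n approx]
    by (simp add: p_def integral_unique has_integral_integrable)
  then show ?thesis
    by linarith
qed

section \<open>The composite rule\<close>

definition panel :: "nat \<Rightarrow> nat \<Rightarrow> (real \<Rightarrow> real) \<Rightarrow> real \<Rightarrow> real" where
  "panel m k f y = f ((real k - 1 + y) / real m)"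

lemma panel_point_in_01:
  assumes "k \<in> {1..m}" and "y \<in> {0..1}"
  shows "(real k - 1 + y) / real m \<in> {0..1}"
  using assms by (auto simp: divide_le_eq)

lemma continuous_on_panel:
  assumes "k \<in> {1..m}" and "continuous_on {0..1} f"
  shows "continuous_on {0..1} (panel m k f)"
proof -
  have "real m \<noteq> 0" using assms(1) by auto
  then show ?thesis
    unfolding panel_def
    by (intro continuous_on_compose2[OF assms(2)] continuous_intros)
      (auto intro: panel_point_in_01[OF assms(1)])
qed

lemma integral_panel:
  assumes k: "k \<in> {1..m}" and f: "continuous_on {0..1} f"
  shows "integral {(real k - 1) / real m..real k / real m} f = integral {0..1} (panel m k f) / real m"
proof -
  have m: "real m > 0" using k by auto
  have "{(real k - 1) / real m..real k / real m} \<subseteq> {0..1}"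
    using k by (auto simp: divide_le_eq)
  then have "(f has_integral integral {(real k - 1) / real m..real k / real m} f)
      (cbox ((real k - 1) / real m) (real k / real m))"
    unfolding cbox_interval
    by (intro integrable_integral integrable_continuous_real continuous_on_subset[OF f])
  from has_integral_affinity'[OF this, of "1 / real m" "(real k - 1) / real m"]
  have "(panel m k f has_integral integral {(real k - 1) / real m..real k / real m} f * real m) {0..1}"
    using m by (simp add: panel_def[abs_def] add_divide_distrib field_simps add_ac)
  then show ?thesis
    using m by (simp add: integral_unique)
qed

lemma integral_eq_sum_panels:
  assumes m: "m \<ge> 1" and f: "continuous_on {0..1} f"
  shows "integral {0..1} f = (\<Sum>k=1..m. integral {0..1} (panel m k f)) / real m"
proof -
  have "integral {0..real j / real m} f = (\<Sum>k=1..j. integral {0..1} (panel m k f)) / real m"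
    if "j \<le> m" for j
    using that
  proof (induction j)
    case (Suc j)
    have "{0..real (Suc j) / real m} \<subseteq> {0..1}"
      using Suc.prems by (auto simp: divide_le_eq)
    then have int: "f integrable_on {0..real (Suc j) / real m}"
      by (intro integrable_continuous_real continuous_on_subset[OF f])
    have "integral {0..real (Suc j) / real m} f
        = integral {0..real j / real m} f + integral {real j / real m..real (Suc j) / real m} f"
      using Henstock_Kurzweil_Integration.integral_combine[OF _ _ int, of "real j / real m"]
      by (simp add: divide_right_mono)
    also have "\<dots> = (\<Sum>k=1..Suc j. integral {0..1} (panel m k f)) / real m"
      using Suc integral_panel[OF _ f, of "Suc j" m] by (simp add: add_divide_distrib)
    finally show ?case .
  qed simp
  from this[of m] m show ?thesis by simp
qed

lemma Inm_eq_sum_panels: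
  assumes "m \<ge> 1" and "n \<ge> 1"
  shows "Inm n m f = (\<Sum>k=1..m. Bernstein_quadrature n (panel m k f)) / real m"
proof -
  have "(real k * real n - real n + real i) / (real m * real n) = (real k - 1 + real i / real n) / real m"
    for k i
    using assms by (simp add: field_simps)
  then show ?thesis
    unfolding Inm_def Bernstein_quadrature_def panel_def
    by (simp add: sum_divide_distrib sum_distrib_left atMost_atLeast0 field_simps)
qed

lemma line_approx_panel:
  assumes k: "k \<in> {1..m}" and approx: "line_approx f A B"
  shows "line_approx (panel m k f) A (B / (real m)\<^sup>2)"
  unfolding line_approx_def
proof
  fix x :: real assume x: "x \<in> {0..1}"
  define p where "p y = (real k - 1 + y) / real m" for y
  obtain l where l: "\<And>u. u \<in> {0..1} \<Longrightarrow> \<bar>f u - f (p x) - l * (u - p x)\<bar> \<le> A + B * (u - p x)\<^sup>2"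
    using approx panel_point_in_01[OF k x] unfolding line_approx_def p_def by blast
  have "\<bar>panel m k f t - panel m k f x - l / real m * (t - x)\<bar> \<le> A + B / (real m)\<^sup>2 * (t - x)\<^sup>2"
    if t: "t \<in> {0..1}" for t
  proof -
    have "p t - p x = (t - x) / real m"
      unfolding p_def diff_divide_distrib[symmetric] by simp
    then show ?thesis
      using l[OF panel_point_in_01[OF k t, folded p_def]]
      by (simp add: panel_def p_def[symmetric] power_divide)
  qed
  then show "\<exists>l. \<forall>t\<in>{0..1}. \<bar>panel m k f t - panel m k f x - l * (t - x)\<bar> \<le> A + B / (real m)\<^sup>2 * (t - x)\<^sup>2"
    by blast
qed

lemma Inm_error:
  assumes m: "m \<ge> 1" and n: "n \<ge> 1" and f: "continuous_on {0..1} f" and approx: "line_approx f A B"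
  shows "\<bar>integral {0..1} f - Inm n m f\<bar> \<le> A + B / (6 * (real m)\<^sup>2 * real n)"
proof -
  define e where "e k = integral {0..1} (panel m k f) - Bernstein_quadrature n (panel m k f)" for k
  have e_le: "\<bar>e k\<bar> \<le> A + B / (6 * (real m)\<^sup>2 * real n)" if k: "k \<in> {1..m}" for k
    using Bernstein_quadrature_error[OF n continuous_on_panel[OF k f] line_approx_panel[OF k approx]]
    by (simp add: e_def)
  have "\<bar>integral {0..1} f - Inm n m f\<bar> = \<bar>\<Sum>k=1..m. e k\<bar> / real m"
    unfolding integral_eq_sum_panels[OF m f] Inm_eq_sum_panels[OF m n] e_def
    by (simp add: sum_subtractf abs_divide flip: diff_divide_distrib)
  also have "\<dots> \<le> (\<Sum>k=1..m. A + B / (6 * (real m)\<^sup>2 * real n)) / real m"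
    by (intro divide_right_mono sum_abs[THEN order_trans] sum_mono e_le) auto
  also have "\<dots> = A + B / (6 * (real m)\<^sup>2 * real n)"
    using m by simp
  finally show ?thesis .
qed

section \<open>The estimate by the K-functional\<close>

lemma abs_le_supnorm01:
  assumes "continuous_on {0..1} h" and "x \<in> {0..1}"
  shows "\<bar>h x\<bar> \<le> supnorm01 h"
proof -
  have "bdd_above ((\<lambda>x. \<bar>h x\<bar>) ` {0..1})"
    by (intro bounded_imp_bdd_above compact_imp_bounded compact_continuous_image
        continuous_intros assms(1) compact_Icc)
  then show ?thesis
    unfolding supnorm01_def using assms(2) by (rule cSUP_upper2) simp
qed

lemma Rolle_within_01:
  assumes "a \<in> {0..1}" "b \<in> {0..1}" "a \<noteq> b" "P a = P b"
    and deriv: "\<And>z. z \<in> {0..1} \<Longrightarrow> (P has_real_derivative P' z) (at z within {0..1})"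
  obtains \<xi> where "min a b < \<xi>" "\<xi> < max a b" "P' \<xi> = 0"
proof -
  have sub: "{min a b..max a b} \<subseteq> {0..1}"
    using assms(1,2) by auto
  have "(P has_derivative (*) (P' z)) (at z within {min a b..max a b})"
    if "min a b \<le> z" "z \<le> max a b" for z
    using has_derivative_subset[OF deriv[unfolded has_field_derivative_def] sub] that sub
    by (meson atLeastAtMost_iff subsetD)
  moreover have "min a b < max a b"
    using assms(3) by linarith
  ultimately obtain \<xi> where \<xi>: "\<xi> \<in> {min a b<..<max a b}"
    and "P (max a b) - P (min a b) = P' \<xi> * (max a b - min a b)"
    using mvt_simple[of "min a b" "max a b" P "\<lambda>z. (*) (P' z)"] by blast
  moreover have "P (max a b) = P (min a b)"
    using assms(4) by (simp add: max_def min_def)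
  ultimately show ?thesis
    using that \<open>min a b < max a b\<close> by auto
qed

lemma C2_01_taylor:
  assumes C: "C2_01 g g1 g2" and M: "\<And>z. z \<in> {0..1} \<Longrightarrow> \<bar>g2 z\<bar> \<le> M"
    and x: "x \<in> {0..1}" and y: "y \<in> {0..1}"
  shows "\<bar>g y - g x - g1 x * (y - x)\<bar> \<le> M / 2 * (y - x)\<^sup>2"
proof (cases "x = y")
  case False
  have dg: "\<And>z. z \<in> {0..1} \<Longrightarrow> (g has_real_derivative g1 z) (at z within {0..1})"
    and dg1: "\<And>z. z \<in> {0..1} \<Longrightarrow> (g1 has_real_derivative g2 z) (at z within {0..1})"
    using C unfolding C2_01_def by auto
  have lip: "\<bar>g1 z - g1 x\<bar> \<le> M * \<bar>z - x\<bar>" if "z \<in> {0..1}" for z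
    using field_differentiable_bound[where S = "{0..1}" and f = g1 and f' = g2 and B = M] dg1 M that x
    by simp
  define \<psi> where "\<psi> z = g z - g x - g1 x * (z - x)" for z
  define \<phi> where "\<phi> z = \<psi> z * (y - x)\<^sup>2 - \<psi> y * (z - x)\<^sup>2" for z
  have "(\<phi> has_real_derivative (g1 z - g1 x) * (y - x)\<^sup>2 - \<psi> y * (2 * (z - x))) (at z within {0..1})"
    if "z \<in> {0..1}" for z
    unfolding \<phi>_def \<psi>_def
    by (auto intro!: derivative_eq_intros dg[OF that] simp: algebra_simps)
  moreover have "\<phi> x = \<phi> y"
    by (simp add: \<phi>_def \<psi>_def)
  ultimately obtain \<xi> where \<xi>: "min x y < \<xi>" "\<xi> < max x y"
    and "(g1 \<xi> - g1 x) * (y - x)\<^sup>2 - \<psi> y * (2 * (\<xi> - x)) = 0"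
    using Rolle_within_01[OF x y False, where P = \<phi>
        and P' = "\<lambda>z. (g1 z - g1 x) * (y - x)\<^sup>2 - \<psi> y * (2 * (z - x))"] by blast
  then have "(g1 \<xi> - g1 x) * (y - x)\<^sup>2 = 2 * \<psi> y * (\<xi> - x)"
    by simp
  then have "2 * \<bar>\<psi> y\<bar> * \<bar>\<xi> - x\<bar> = \<bar>g1 \<xi> - g1 x\<bar> * (y - x)\<^sup>2"
    by (metis abs_mult abs_power2 abs_numeral)
  also have "\<dots> \<le> M * \<bar>\<xi> - x\<bar> * (y - x)\<^sup>2"
    using \<xi> x y by (intro mult_right_mono lip) auto
  finally have "\<bar>\<psi> y\<bar> * (2 * \<bar>\<xi> - x\<bar>) \<le> M / 2 * (y - x)\<^sup>2 * (2 * \<bar>\<xi> - x\<bar>)"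
    by (simp add: algebra_simps)
  moreover have "\<xi> \<noteq> x"
    using \<xi> by auto
  ultimately show ?thesis
    by (simp add: \<psi>_def)
qed simp

lemma line_approx_C2_01:
  assumes C: "C2_01 g g1 g2" and S: "\<And>x. x \<in> {0..1} \<Longrightarrow> \<bar>f x - g x\<bar> \<le> S"
    and M: "\<And>z. z \<in> {0..1} \<Longrightarrow> \<bar>g2 z\<bar> \<le> M"
  shows "line_approx f (2 * S) (M / 2)"
  unfolding line_approx_def
proof (intro ballI exI)
  fix x t :: real assume x: "x \<in> {0..1}" and t: "t \<in> {0..1}"
  have "f t - f x - g1 x * (t - x) = (f t - g t) - (f x - g x) + (g t - g x - g1 x * (t - x))"
    by simp
  then show "\<bar>f t - f x - g1 x * (t - x)\<bar> \<le> 2 * S + M / 2 * (t - x)\<^sup>2"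
    using S[OF x] S[OF t] C2_01_taylor[OF C M x t] by linarith
qed

lemma Inm_error_Kfun:
  assumes m: "m \<ge> 1" and n: "n \<ge> 1" and f: "continuous_on {0..1} f"
  shows "\<bar>integral {0..1} f - Inm n m f\<bar> \<le> 2 * Kfun (1 / (24 * (real m)\<^sup>2 * real n)) f"
proof -
  define \<delta> where "\<delta> = 1 / (24 * (real m)\<^sup>2 * real n)"
  have "\<bar>integral {0..1} f - Inm n m f\<bar> / 2 \<le> supnorm01 (\<lambda>x. f x - g x) + \<delta> * supnorm01 g2"
    if C: "C2_01 g g1 g2" for g g1 g2
  proof -
    have "continuous_on {0..1} g"
      using C by (auto simp: C2_01_def intro: DERIV_continuous_on)
    then have "line_approx f (2 * supnorm01 (\<lambda>x. f x - g x)) (supnorm01 g2 / 2)"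
      using C abs_le_supnorm01[of "\<lambda>x. f x - g x"] abs_le_supnorm01[of g2]
      by (intro line_approx_C2_01) (auto simp: C2_01_def intro: continuous_intros f)
    from Inm_error[OF m n f this] show ?thesis
      by (simp add: \<delta>_def algebra_simps)
  qed
  moreover have "C2_01 (\<lambda>_. 0) (\<lambda>_. 0) (\<lambda>_. 0)"
    by (simp add: C2_01_def)
  ultimately have "\<bar>integral {0..1} f - Inm n m f\<bar> / 2 \<le> Kfun \<delta> f"
    unfolding Kfun_def by (intro cInf_greatest) auto
  then show ?thesis
    by (simp add: \<delta>_def)
qed

section \<open>The estimate by the second modulus of smoothness\<close>

definition second_diff_le :: "(real \<Rightarrow> real) \<Rightarrow> real \<Rightarrow> real \<Rightarrow> bool" where
  "second_diff_le F \<tau> W \<longleftrightarrow> (\<forall>y s. y - s \<in> {0..1} \<and> y + s \<in> {0..1} \<and> \<bar>s\<bar> \<le> \<tau> \<longrightarrow>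
     \<bar>F (y - s) - 2 * F y + F (y + s)\<bar> \<le> W)"

lemma second_diff_leD:
  "second_diff_le F \<tau> W \<Longrightarrow> y - s \<in> {0..1} \<Longrightarrow> y + s \<in> {0..1} \<Longrightarrow> \<bar>s\<bar> \<le> \<tau> \<Longrightarrow>
     \<bar>F (y - s) - 2 * F y + F (y + s)\<bar> \<le> W"
  unfolding second_diff_le_def by blast

lemma second_diff_le_nonneg: "second_diff_le F \<tau> W \<Longrightarrow> 0 \<le> \<tau> \<Longrightarrow> 0 \<le> W"
  using second_diff_leD[of F \<tau> W 0 0] by simp

lemma second_diff_le_reflect:
  assumes "second_diff_le F \<tau> W"
  shows "second_diff_le (\<lambda>y. F (1 - y)) \<tau> W"
  unfolding second_diff_le_def
proof (intro allI impI)
  fix y s :: real assume "y - s \<in> {0..1} \<and> y + s \<in> {0..1} \<and> \<bar>s\<bar> \<le> \<tau>"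
  then have "\<bar>F ((1 - y) - (- s)) - 2 * F (1 - y) + F ((1 - y) + (- s))\<bar> \<le> W"
    by (intro second_diff_leD[OF assms]) auto
  then show "\<bar>F (1 - (y - s)) - 2 * F (1 - y) + F (1 - (y + s))\<bar> \<le> W"
    by (simp add: algebra_simps)
qed

lemma continuous_on_reflect_01:
  "continuous_on {0..1} F \<Longrightarrow> continuous_on {0..1} (\<lambda>y::real. F (1 - y))"
  by (rule continuous_on_compose2[of _ F]) (auto intro: continuous_intros)

lemma second_diff_le_omega2:
  assumes f: "continuous_on {0..1} f"
  shows "second_diff_le f \<delta> (omega2 f \<delta>)"
  unfolding second_diff_le_def omega2_def
proof (intro allI impI cSup_upper)
  fix y s assume "y - s \<in> {0..1} \<and> y + s \<in> {0..1} \<and> \<bar>s\<bar> \<le> \<delta>"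
  then show "\<bar>f (y - s) - 2 * f y + f (y + s)\<bar> \<in> {\<bar>f (x - h) - 2 * f x + f (x + h)\<bar> | x h.
      x - h \<in> {0..1} \<and> x + h \<in> {0..1} \<and> \<bar>h\<bar> \<le> \<delta>}"
    by blast
  show "bdd_above {\<bar>f (x - h) - 2 * f x + f (x + h)\<bar> | x h.
      x - h \<in> {0..1} \<and> x + h \<in> {0..1} \<and> \<bar>h\<bar> \<le> \<delta>}"
  proof (rule bdd_aboveI, safe)
    fix x h :: real assume "x - h \<in> {0..1}" "x + h \<in> {0..1}"
    moreover from this have "x \<in> {0..1}"
      by auto
    ultimately have "\<bar>f (x - h)\<bar> \<le> supnorm01 f" "\<bar>f x\<bar> \<le> supnorm01 f" "\<bar>f (x + h)\<bar> \<le> supnorm01 f"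
      by (simp_all add: abs_le_supnorm01[OF f])
    then show "\<bar>f (x - h) - 2 * f x + f (x + h)\<bar> \<le> 4 * supnorm01 f"
      by (auto simp: abs_le_iff)
  qed
qed

text \<open>A discrete maximum principle: take \<open>u\<close> where \<open>\<bar>\<phi>\<bar>\<close> is maximal and the largest step
  \<open>h\<close> keeping \<open>u \<plusminus> h\<close> in \<open>[0,1]\<close>; one of \<open>\<phi> (u \<plusminus> h)\<close> vanishes, so \<open>2 \<bar>\<phi> u\<bar> \<le> \<bar>\<phi> u\<bar> + W\<close>.\<close>
lemma second_diff_le_vanishing_ends:
  assumes H: "second_diff_le \<phi> (1 / 2) W" and \<phi>: "continuous_on {0..1} \<phi>"
    and ends: "\<phi> 0 = 0" "\<phi> 1 = 0" and u: "u \<in> {0..1}"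
  shows "\<bar>\<phi> u\<bar> \<le> W"
proof -
  have "continuous_on {0..1} (\<lambda>v. \<bar>\<phi> v\<bar>)"
    using \<phi> by (intro continuous_intros)
  then obtain u0 where u0: "u0 \<in> {0..1}" "\<And>v. v \<in> {0..1} \<Longrightarrow> \<bar>\<phi> v\<bar> \<le> \<bar>\<phi> u0\<bar>"
    using continuous_attains_sup[of "{0..1}" "\<lambda>v. \<bar>\<phi> v\<bar>"] by auto
  define h where "h = min u0 (1 - u0)"
  have "\<bar>\<phi> (u0 - h) - 2 * \<phi> u0 + \<phi> (u0 + h)\<bar> \<le> W"
    using u0(1) by (intro second_diff_leD[OF H]) (auto simp: h_def min_def)
  moreover have "\<phi> (u0 - h) = 0 \<and> \<bar>\<phi> (u0 + h)\<bar> \<le> \<bar>\<phi> u0\<bar> \<or> \<phi> (u0 + h) = 0 \<and> \<bar>\<phi> (u0 - h)\<bar> \<le> \<bar>\<phi> u0\<bar>"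
    using u0 ends by (auto simp: h_def min_def)
  ultimately have "\<bar>\<phi> u0\<bar> \<le> W"
    by linarith
  then show ?thesis
    using u0(2)[OF u] by linarith
qed

lemma segment_point_in_01:
  fixes a b u :: real
  assumes "0 \<le> a" "a \<le> b" "b \<le> 1" "u \<in> {0..1}"
  shows "a + u * (b - a) \<in> {0..1}"
proof -
  have "0 \<le> u * (b - a)" "u * (b - a) \<le> b - a"
    using assms by (auto simp: mult_left_le_one_le)
  then show ?thesis
    using assms by simp
qed

lemma second_diff_le_affine_rescale:
  assumes H: "second_diff_le F \<tau> W" and ab: "0 \<le> a" "a < b" "b \<le> 1" and width: "b - a \<le> 2 * \<tau>"
  shows "second_diff_le (\<lambda>u. F (a + u * (b - a)) - (1 - u) * F a - u * F b) (1 / 2) W"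
  unfolding second_diff_le_def
proof (intro allI impI)
  fix u h :: real assume uh: "u - h \<in> {0..1} \<and> u + h \<in> {0..1} \<and> \<bar>h\<bar> \<le> 1 / 2"
  have "\<bar>h\<bar> * (b - a) \<le> 1 / 2 * (2 * \<tau>)"
    using uh ab width by (intro mult_mono) auto
  then have "\<bar>h * (b - a)\<bar> \<le> \<tau>"
    using ab by (simp add: abs_mult)
  moreover have "a + (u - h) * (b - a) \<in> {0..1}" "a + (u + h) * (b - a) \<in> {0..1}"
    using segment_point_in_01[of a b "u - h"] segment_point_in_01[of a b "u + h"] uh ab by auto
  ultimately have "\<bar>F (a + u * (b - a) - h * (b - a)) - 2 * F (a + u * (b - a))
      + F (a + u * (b - a) + h * (b - a))\<bar> \<le> W"
    by (intro second_diff_leD[OF H]) (simp_all add: algebra_simps)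
  then show "\<bar>F (a + (u - h) * (b - a)) - (1 - (u - h)) * F a - (u - h) * F b
      - 2 * (F (a + u * (b - a)) - (1 - u) * F a - u * F b)
      + (F (a + (u + h) * (b - a)) - (1 - (u + h)) * F a - (u + h) * F b)\<bar> \<le> W"
    by (simp add: algebra_simps)
qed

text \<open>Divided by \<open>b - a\<close>, this bounds the distance of \<open>F c\<close> from the chord of \<open>F\<close> over \<open>[a, b]\<close>.\<close>
lemma second_diff_le_chord:
  assumes H: "second_diff_le F \<tau> W" and F: "continuous_on {0..1} F"
    and abc: "0 \<le> a" "a \<le> c" "c \<le> b" "b \<le> 1" and width: "b - a \<le> 2 * \<tau>"
  shows "\<bar>(b - a) * F c - (b - c) * F a - (c - a) * F b\<bar> \<le> (b - a) * W"
proof (cases "a = b")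
  case False
  then have ab: "0 < b - a"
    using abc by simp
  define \<phi> where "\<phi> = (\<lambda>u. F (a + u * (b - a)) - (1 - u) * F a - u * F b)"
  define r where "r = (c - a) / (b - a)"
  have "continuous_on {0..1} \<phi>"
    unfolding \<phi>_def using abc segment_point_in_01[of a b]
    by (intro continuous_intros continuous_on_compose2[OF F]) auto
  moreover have "r \<in> {0..1}"
    using abc ab by (simp add: r_def)
  ultimately have bound: "\<bar>\<phi> r\<bar> \<le> W"
    using second_diff_le_affine_rescale[OF H abc(1) _ abc(4) width, folded \<phi>_def] ab
    by (intro second_diff_le_vanishing_ends[of \<phi>]) (simp_all add: \<phi>_def)
  have r: "(b - a) * r = c - a"
    using ab by (simp add: r_def)
  then have r': "(b - a) * (1 - r) = b - c"
    by (simp add: right_diff_distrib)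
  have "(b - a) * \<phi> r = (b - a) * F (a + (b - a) * r) - ((b - a) * (1 - r)) * F a - ((b - a) * r) * F b"
    unfolding \<phi>_def by (simp add: algebra_simps)
  then have "(b - a) * \<phi> r = (b - a) * F c - (b - c) * F a - (c - a) * F b"
    unfolding r r' by simp
  then show ?thesis
    using bound ab by (metis abs_mult abs_of_pos mult_left_mono order_less_imp_le)
qed (use abc in simp)

lemma second_diff_le_increment:
  assumes H: "second_diff_le F \<tau> W" and \<tau>: "0 \<le> \<tau>" and x: "0 \<le> x"
    and j: "x + (real j + 1) * \<tau> \<le> 1"
  shows "\<bar>F (x + (real j + 1) * \<tau>) - F (x + real j * \<tau>) - (F (x + \<tau>) - F x)\<bar> \<le> real j * W"
  using j
proof (induction j)
  case (Suc j)
  have "\<bar>F (x + real j * \<tau>) - 2 * F (x + (real j + 1) * \<tau>) + F (x + (real j + 2) * \<tau>)\<bar> \<le> W"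
    using second_diff_leD[OF H, of "x + (real j + 1) * \<tau>" \<tau>] Suc.prems x \<tau>
    by (simp add: algebra_simps)
  moreover have "\<bar>F (x + (real j + 1) * \<tau>) - F (x + real j * \<tau>) - (F (x + \<tau>) - F x)\<bar> \<le> real j * W"
    using Suc \<tau> by (simp add: algebra_simps)
  ultimately show ?case
    by (simp add: algebra_simps)
qed simp

lemma second_diff_le_nodes:
  assumes H: "second_diff_le F \<tau> W" and \<tau>: "0 \<le> \<tau>" and x: "0 \<le> x"
    and j: "x + real j * \<tau> \<le> 1"
  shows "\<bar>F (x + real j * \<tau>) - F x - real j * (F (x + \<tau>) - F x)\<bar> \<le> real j * (real j - 1) / 2 * W"
  using j
proof (induction j)
  case (Suc j)
  define E where "E = F (x + real j * \<tau>) - F x - real j * (F (x + \<tau>) - F x)"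
  define I where "I = F (x + (real j + 1) * \<tau>) - F (x + real j * \<tau>) - (F (x + \<tau>) - F x)"
  have "\<bar>E\<bar> \<le> real j * (real j - 1) / 2 * W"
    using Suc \<tau> by (simp add: E_def algebra_simps)
  moreover have "\<bar>I\<bar> \<le> real j * W"
    using second_diff_le_increment[OF H \<tau> x, of j] Suc.prems by (simp add: I_def add.commute)
  ultimately have "\<bar>E + I\<bar> \<le> real j * (real j - 1) / 2 * W + real j * W"
    by (meson abs_triangle_ineq add_mono order_trans)
  also have "\<dots> = real (Suc j) * (real (Suc j) - 1) / 2 * W"
    by (simp add: field_simps)
  also have "E + I = F (x + real (Suc j) * \<tau>) - F x - real (Suc j) * (F (x + \<tau>) - F x)"
    by (simp add: E_def I_def algebra_simps)
  finally show ?case .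
qed simp

lemma second_diff_le_past_node:
  assumes H: "second_diff_le F \<tau> W" and F: "continuous_on {0..1} F" and \<tau>: "0 < \<tau>"
    and x: "0 \<le> x" and \<rho>: "0 \<le> \<rho>" "\<rho> \<le> 1" and t: "t = x + (real j + 1 + \<rho>) * \<tau>" "t \<le> 1"
  shows "\<bar>F t - F x - (real j + 1 + \<rho>) * (F (x + \<tau>) - F x)\<bar> \<le> W * (1 + (real j + 1 + \<rho>)\<^sup>2 / 2)"
proof -
  define D where "D = F (x + \<tau>) - F x"
  define a where "a = x + real j * \<tau>"
  define c where "c = x + (real j + 1) * \<tau>"
  have W: "0 \<le> W"
    using second_diff_le_nonneg[OF H] \<tau> by simp
  have ca: "c - a = \<tau>" and tc: "t - c = \<rho> * \<tau>" and ta: "t - a = \<tau> * (1 + \<rho>)"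
    using t by (simp_all add: a_def c_def algebra_simps)
  have "0 \<le> \<rho> * \<tau>"
    using \<rho> \<tau> by simp
  then have ct: "c \<le> t"
    using tc by linarith
  have "\<bar>(t - a) * F c - (t - c) * F a - (c - a) * F t\<bar> \<le> (t - a) * W"
    using \<tau> \<rho> x t ca ta ct by (intro second_diff_le_chord[OF H F]) (simp_all add: a_def)
  moreover have "(t - a) * F c - (t - c) * F a - (c - a) * F t = \<tau> * ((1 + \<rho>) * F c - \<rho> * F a - F t)"
    unfolding ta tc ca by (simp add: algebra_simps)
  ultimately have chord: "\<bar>(1 + \<rho>) * F c - \<rho> * F a - F t\<bar> \<le> (1 + \<rho>) * W"
    using \<tau> by (simp add: ta abs_mult mult.assoc)
  have "c \<le> 1"
    using ct t by linarith
  then have c1: "x + (real j + 1) * \<tau> \<le> 1"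
    by (simp add: c_def)
  have nodes: "\<bar>F c - F x - (real j + 1) * D\<bar> \<le> (real j + 1) * real j / 2 * W"
    using second_diff_le_nodes[OF H _ x, of "Suc j"] \<tau> c1
    by (simp add: c_def D_def add.commute)
  have "\<bar>F c - F a - D\<bar> \<le> real j * W"
    using second_diff_le_increment[OF H _ x c1] \<tau>
    by (simp add: a_def c_def D_def)
  then have incr: "\<bar>\<rho> * (F c - F a - D)\<bar> \<le> \<rho> * (real j * W)"
    using \<rho> by (simp add: abs_mult mult_left_mono)
  have "F t - F x - (real j + 1 + \<rho>) * D = (F c - F x - (real j + 1) * D) + \<rho> * (F c - F a - D)
      - ((1 + \<rho>) * F c - \<rho> * F a - F t)"
    by (simp add: algebra_simps)
  then have "\<bar>F t - F x - (real j + 1 + \<rho>) * D\<bar>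
      \<le> (real j + 1) * real j / 2 * W + \<rho> * (real j * W) + (1 + \<rho>) * W"
    using nodes incr chord by arith
  also have "\<dots> = W * (1 + (real j + 1 + \<rho>)\<^sup>2 / 2 - (real j + 1 + \<rho>\<^sup>2) / 2)"
    by (simp add: power2_eq_square field_simps)
  also have "\<dots> \<le> W * (1 + (real j + 1 + \<rho>)\<^sup>2 / 2)"
    using W by (intro mult_left_mono) auto
  finally show ?thesis
    by (simp add: D_def)
qed

text \<open>Write \<open>t = x + (q + \<rho>) \<tau>\<close> with \<open>q\<close> integral and \<open>0 \<le> \<rho> < 1\<close>: telescope over the nodes
  \<open>x + j \<tau>\<close> and use a chord of width at most \<open>2 \<tau>\<close> for the remaining fraction.\<close>
lemma second_diff_le_forward:
  assumes H: "second_diff_le F \<tau> W" and F: "continuous_on {0..1} F" and \<tau>: "0 < \<tau>"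
    and x: "0 \<le> x" "x + \<tau> \<le> 1" and t: "x \<le> t" "t \<le> 1"
  shows "\<bar>F t - F x - (t - x) / \<tau> * (F (x + \<tau>) - F x)\<bar> \<le> W * (1 + ((t - x) / \<tau>)\<^sup>2 / 2)"
proof -
  define s where "s = (t - x) / \<tau>"
  define q where "q = nat \<lfloor>s\<rfloor>"
  define \<rho> where "\<rho> = s - real q"
  have "0 \<le> s"
    using t \<tau> by (simp add: s_def)
  then have \<rho>: "0 \<le> \<rho>" "\<rho> < 1"
    unfolding \<rho>_def q_def by linarith+
  have t_eq: "t = x + (real q + \<rho>) * \<tau>"
    using \<tau> by (simp add: \<rho>_def s_def)
  show ?thesis
  proof (cases q)
    case 0
    have "\<bar>\<tau> * F t - (x + \<tau> - t) * F x - (t - x) * F (x + \<tau>)\<bar> \<le> \<tau> * W"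
      using second_diff_le_chord[OF H F, of x t "x + \<tau>"] x t t_eq 0 \<rho> \<tau> by simp
    moreover have "\<tau> * F t - (x + \<tau> - t) * F x - (t - x) * F (x + \<tau>)
        = \<tau> * (F t - F x - (t - x) / \<tau> * (F (x + \<tau>) - F x))"
      using \<tau> by (simp add: field_simps)
    ultimately have "\<bar>F t - F x - (t - x) / \<tau> * (F (x + \<tau>) - F x)\<bar> \<le> W"
      using \<tau> by (simp add: abs_mult)
    moreover have "W * 1 \<le> W * (1 + ((t - x) / \<tau>)\<^sup>2 / 2)"
      using second_diff_le_nonneg[OF H] \<tau> by (intro mult_left_mono) auto
    ultimately show ?thesis
      by simp
  next
    case (Suc j)
    then have "s = real j + 1 + \<rho>"
      by (simp add: \<rho>_def)
    then show ?thesis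
      using second_diff_le_past_node[OF H F \<tau> x(1) \<rho>(1) _ _ t(2), of j] \<rho> t_eq Suc
      by (simp add: s_def add.commute)
  qed
qed

lemma second_diff_le_central_right:
  assumes H: "second_diff_le F \<tau> W" and F: "continuous_on {0..1} F" and \<tau>: "0 < \<tau>"
    and x: "\<tau> \<le> x" "x + \<tau> \<le> 1" and t: "x \<le> t" "t \<le> 1"
  shows "\<bar>F t - F x - (F (x + \<tau>) - F (x - \<tau>)) / (2 * \<tau>) * (t - x)\<bar>
    \<le> 3 / 2 * W + 3 * W / (4 * \<tau>\<^sup>2) * (t - x)\<^sup>2"
proof -
  define s where "s = (t - x) / \<tau>"
  define D where "D = F (x + \<tau>) - F x"
  define l where "l = (F (x + \<tau>) - F (x - \<tau>)) / (2 * \<tau>)"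
  have W: "0 \<le> W"
    using second_diff_le_nonneg[OF H] \<tau> by simp
  have s: "0 \<le> s"
    using t \<tau> by (simp add: s_def)
  have forward: "\<bar>F t - F x - s * D\<bar> \<le> W * (1 + s\<^sup>2 / 2)"
    using second_diff_le_forward[OF H F \<tau> _ x(2) t] x \<tau> by (simp add: s_def D_def)
  have \<Delta>: "\<bar>F (x - \<tau>) - 2 * F x + F (x + \<tau>)\<bar> \<le> W"
    using x \<tau> by (intro second_diff_leD[OF H]) auto
  have half: "D - l * \<tau> = (F (x - \<tau>) - 2 * F x + F (x + \<tau>)) / 2"
    using \<tau> by (simp add: D_def l_def field_simps)
  have "\<bar>D - l * \<tau>\<bar> \<le> W / 2"
    unfolding half using \<Delta> by simp
  then have "\<bar>s * (D - l * \<tau>)\<bar> \<le> s * (W / 2)"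
    unfolding abs_mult abs_of_nonneg[OF s] by (rule mult_left_mono[OF _ s])
  moreover have "F t - F x - l * (t - x) = (F t - F x - s * D) + s * (D - l * \<tau>)"
    using \<tau> by (simp add: s_def field_simps)
  ultimately have "\<bar>F t - F x - l * (t - x)\<bar> \<le> W * (1 + s\<^sup>2 / 2) + s * (W / 2)"
    using forward by linarith
  also have "\<dots> \<le> W * (3 / 2 + 3 / 4 * s\<^sup>2)"
  proof -
    have "3 / 2 + 3 / 4 * s\<^sup>2 - (1 + s\<^sup>2 / 2 + s / 2) = ((s - 1)\<^sup>2 + 1) / 4"
      by (simp add: power2_eq_square field_simps)
    moreover have "0 \<le> ((s - 1)\<^sup>2 + 1) / 4"
      by simp
    ultimately have "1 + s\<^sup>2 / 2 + s / 2 \<le> 3 / 2 + 3 / 4 * s\<^sup>2"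
      by linarith
    then have "W * (1 + s\<^sup>2 / 2 + s / 2) \<le> W * (3 / 2 + 3 / 4 * s\<^sup>2)"
      by (rule mult_left_mono[OF _ W])
    then show ?thesis
      by (simp add: algebra_simps)
  qed
  also have "\<dots> = 3 / 2 * W + 3 * W / (4 * \<tau>\<^sup>2) * (t - x)\<^sup>2"
    using \<tau> by (simp add: s_def power_divide field_simps)
  finally show ?thesis
    by (simp add: l_def)
qed

lemma second_diff_le_central:
  assumes H: "second_diff_le F \<tau> W" and F: "continuous_on {0..1} F" and \<tau>: "0 < \<tau>"
    and x: "\<tau> \<le> x" "x + \<tau> \<le> 1" and t: "t \<in> {0..1}"
  shows "\<bar>F t - F x - (F (x + \<tau>) - F (x - \<tau>)) / (2 * \<tau>) * (t - x)\<bar>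
    \<le> 3 / 2 * W + 3 * W / (4 * \<tau>\<^sup>2) * (t - x)\<^sup>2"
proof (cases "x \<le> t")
  case True
  then show ?thesis
    using second_diff_le_central_right[OF H F \<tau> x True] t by simp
next
  case False
  have bound: "\<bar>F (1 - (1 - t)) - F (1 - (1 - x))
      - (F (1 - ((1 - x) + \<tau>)) - F (1 - ((1 - x) - \<tau>))) / (2 * \<tau>) * ((1 - t) - (1 - x))\<bar>
      \<le> 3 / 2 * W + 3 * W / (4 * \<tau>\<^sup>2) * ((1 - t) - (1 - x))\<^sup>2"
    using False t x
    by (intro second_diff_le_central_right[OF second_diff_le_reflect[OF H] continuous_on_reflect_01[OF F] \<tau>])
      simp_all
  have slope: "(F (1 - ((1 - x) + \<tau>)) - F (1 - ((1 - x) - \<tau>))) / (2 * \<tau>) * ((1 - t) - (1 - x))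
      = (F (x + \<tau>) - F (x - \<tau>)) / (2 * \<tau>) * (t - x)"
    using \<tau> by (simp add: field_simps)
  have sq: "((1 - t) - (1 - x))\<^sup>2 = (t - x)\<^sup>2"
    by (simp add: power2_commute)
  from bound show ?thesis
    unfolding slope sq by simp
qed

lemma second_diff_le_backward:
  assumes H: "second_diff_le F \<tau> W" and F: "continuous_on {0..1} F" and \<tau>: "0 < \<tau>"
    and x: "x + \<tau> \<le> 1" and t: "0 \<le> t" "t \<le> x" "x - t \<le> \<tau>"
  shows "\<bar>F t - F x - (t - x) / \<tau> * (F (x + \<tau>) - F x)\<bar> \<le> W * (1 + (x - t) / \<tau>)"
proof -
  have "\<bar>(x + \<tau> - t) * F x - (x + \<tau> - x) * F t - (x - t) * F (x + \<tau>)\<bar> \<le> (x + \<tau> - t) * W"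
    using \<tau> x t by (intro second_diff_le_chord[OF H F]) auto
  moreover have "(x + \<tau> - t) * F x - (x + \<tau> - x) * F t - (x - t) * F (x + \<tau>)
      = - \<tau> * (F t - F x - (t - x) / \<tau> * (F (x + \<tau>) - F x))"
    using \<tau> by (simp add: field_simps)
  moreover have "x + \<tau> - t = \<tau> * (1 + (x - t) / \<tau>)"
    using \<tau> by (simp add: field_simps)
  ultimately show ?thesis
    using \<tau> by (simp add: abs_mult mult.commute mult.left_commute)
qed

lemma second_diff_le_near_left_end:
  assumes H: "second_diff_le F \<tau> W" and F: "continuous_on {0..1} F" and \<tau>: "0 < \<tau>"
    and x: "0 \<le> x" "x < \<tau>" "x + \<tau> \<le> 1" and t: "t \<in> {0..1}"
  shows "\<bar>F t - F x - (F (x + \<tau>) - F x) / \<tau> * (t - x)\<bar> \<le> 3 / 2 * W + 3 * W / (4 * \<tau>\<^sup>2) * (t - x)\<^sup>2"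
proof -
  have W: "0 \<le> W"
    using second_diff_le_nonneg[OF H] \<tau> by simp
  have "3 / 2 * W + 3 * W / (4 * \<tau>\<^sup>2) * (t - x)\<^sup>2 = W * (3 / 2 + 3 / 4 * ((t - x) / \<tau>)\<^sup>2)"
    using \<tau> by (simp add: power_divide field_simps)
  moreover have "\<bar>F t - F x - (F (x + \<tau>) - F x) / \<tau> * (t - x)\<bar> \<le> W * (3 / 2 + 3 / 4 * ((t - x) / \<tau>)\<^sup>2)"
  proof (cases "x \<le> t")
    case True
    have "\<bar>F t - F x - (F (x + \<tau>) - F x) / \<tau> * (t - x)\<bar> \<le> W * (1 + ((t - x) / \<tau>)\<^sup>2 / 2)"
      using second_diff_le_forward[OF H F \<tau> x(1,3) True] t by (simp add: ac_simps)
    also have "\<dots> \<le> W * (3 / 2 + 3 / 4 * ((t - x) / \<tau>)\<^sup>2)"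
      using zero_le_power2[of "(t - x) / \<tau>"] by (intro mult_left_mono[OF _ W]) linarith
    finally show ?thesis .
  next
    case False
    define r where "r = (x - t) / \<tau>"
    have "\<bar>F t - F x - (F (x + \<tau>) - F x) / \<tau> * (t - x)\<bar> \<le> W * (1 + r)"
      using second_diff_le_backward[OF H F \<tau> x(3), of t] x t False by (simp add: r_def ac_simps)
    also have "\<dots> \<le> W * (3 / 2 + 3 / 4 * r\<^sup>2)"
    proof (rule mult_left_mono[OF _ W])
      have "3 / 2 + 3 / 4 * r\<^sup>2 - (1 + r) = 3 / 4 * (r - 2 / 3)\<^sup>2 + 1 / 6"
        by (simp add: power2_eq_square field_simps)
      moreover have "0 \<le> 3 / 4 * (r - 2 / 3)\<^sup>2 + 1 / 6"
        by simp
      ultimately show "1 + r \<le> 3 / 2 + 3 / 4 * r\<^sup>2"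
        by linarith
    qed
    also have "r\<^sup>2 = ((t - x) / \<tau>)\<^sup>2"
      unfolding r_def power_divide by (simp add: power2_commute)
    finally show ?thesis .
  qed
  ultimately show ?thesis
    by simp
qed

text \<open>Slopes: a central difference quotient in the interior, a one-sided one within \<open>\<tau>\<close> of the ends.\<close>
lemma line_approx_second_diff:
  assumes H: "second_diff_le F \<tau> W" and F: "continuous_on {0..1} F"
    and \<tau>: "0 < \<tau>" "\<tau> \<le> 1 / 2"
  shows "line_approx F (3 / 2 * W) (3 * W / (4 * \<tau>\<^sup>2))"
  unfolding line_approx_def
proof
  fix x :: real assume x: "x \<in> {0..1}"
  consider "x < \<tau>" | "\<tau> \<le> x" "x + \<tau> \<le> 1" | "1 < x + \<tau>"
    by linarith
  then show "\<exists>l. \<forall>t\<in>{0..1}. \<bar>F t - F x - l * (t - x)\<bar> \<le> 3 / 2 * W + 3 * W / (4 * \<tau>\<^sup>2) * (t - x)\<^sup>2"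
  proof cases
    case 1
    moreover have "x + \<tau> \<le> 1"
      using 1 \<tau>(2) by simp
    ultimately show ?thesis
      using x by (intro exI[of _ "(F (x + \<tau>) - F x) / \<tau>"] ballI second_diff_le_near_left_end[OF H F \<tau>(1)])
        auto
  next
    case 2
    then show ?thesis
      using second_diff_le_central[OF H F \<tau>(1)] by blast
  next
    case 3
    have slope: "(F (1 - ((1 - x) + \<tau>)) - F (1 - (1 - x))) / \<tau> * ((1 - t) - (1 - x))
        = (F x - F (x - \<tau>)) / \<tau> * (t - x)" for t
      using \<tau> by (simp add: field_simps)
    have sq: "((1 - t) - (1 - x))\<^sup>2 = (t - x)\<^sup>2" for t
      by (simp add: power2_commute)
    have "\<bar>F (1 - (1 - t)) - F (1 - (1 - x)) - (F (1 - ((1 - x) + \<tau>)) - F (1 - (1 - x))) / \<tau> * ((1 - t) - (1 - x))\<bar>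
        \<le> 3 / 2 * W + 3 * W / (4 * \<tau>\<^sup>2) * ((1 - t) - (1 - x))\<^sup>2" if "t \<in> {0..1}" for t
      using 3 x \<tau>(2) that
      by (intro second_diff_le_near_left_end[OF second_diff_le_reflect[OF H] continuous_on_reflect_01[OF F]
            \<tau>(1)]) auto
    then have "\<forall>t\<in>{0..1}. \<bar>F t - F x - (F x - F (x - \<tau>)) / \<tau> * (t - x)\<bar>
        \<le> 3 / 2 * W + 3 * W / (4 * \<tau>\<^sup>2) * (t - x)\<^sup>2"
      unfolding slope sq by simp
    then show ?thesis
      by blast
  qed
qed

lemma Inm_error_omega2:
  assumes m: "m \<ge> 1" and n: "n \<ge> 1" and f: "continuous_on {0..1} f"
  shows "\<bar>integral {0..1} f - Inm n m f\<bar> \<le> 9 / 4 * omega2 f (1 / (real m * sqrt (6 * real n)))"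
proof -
  define \<tau> where "\<tau> = 1 / (real m * sqrt (6 * real n))"
  define W where "W = omega2 f \<tau>"
  have \<tau>_sq: "\<tau>\<^sup>2 = 1 / (6 * (real m)\<^sup>2 * real n)"
    using n by (simp add: \<tau>_def power_divide power_mult_distrib)
  have "1 \<le> (real m)\<^sup>2 * real n"
    using m n by (simp add: one_le_power mult_ge1_I)
  then have "\<tau>\<^sup>2 \<le> (1 / 2)\<^sup>2"
    unfolding \<tau>_sq by (simp add: power2_eq_square divide_le_eq)
  moreover have "0 < \<tau>"
    using m n by (simp add: \<tau>_def)
  ultimately have "0 < \<tau>" "\<tau> \<le> 1 / 2"
    by (auto intro: power2_le_imp_le)
  from Inm_error[OF m n f line_approx_second_diff[OF second_diff_le_omega2[OF f] f this]]
  have "\<bar>integral {0..1} f - Inm n m f\<bar> \<le> 3 / 2 * W + 3 * W / (4 * \<tau>\<^sup>2) / (6 * (real m)\<^sup>2 * real n)"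
    by (simp add: W_def)
  also have "\<dots> = 9 / 4 * W"
    using m n unfolding \<tau>_sq by (simp add: field_simps)
  finally show ?thesis
    by (simp add: W_def \<tau>_def)
qed

theorem mainTheorem6:
  fixes f :: "real \<Rightarrow> real" and m n :: nat
  assumes "m \<ge> 1" and "n \<ge> 1" and "continuous_on {0..1} f"
  shows "\<bar>integral {0..1} f - Inm n m f\<bar> \<le> 2 * Kfun (1 / (24 * (real m)^2 * real n)) f \<and>
    \<bar>integral {0..1} f - Inm n m f\<bar> \<le> 9 / 4 * omega2 f (1 / (real m * sqrt (6 * real n)))"
  using Inm_error_Kfun[OF assms] Inm_error_omega2[OF assms] by simp

end
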